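(* Assume (B1)–(B3) and consider the NL-IAPIAL method described in the context. For every $k\ge1$ at which $p_k$ is computed, $$\mathcal L_{c_k}(z_k;p_k)\le\mathcal L_{c_k}(z_k;p_{k-1})+\frac1{c_k}\|p_k-p_{k-1}\|^2,$$ $$\mathcal L_{c_k}(z_k;p_k)\le\mathcal L_{c_k}(z_{k-1};p_{k-1})-\Big(\frac{1-\sigma^2}{2\lambda}\Big)\|r_k\|^2+\frac1{c_k}\|p_k-p_{k-1}\|^2.$$
   Context: $\mathcal K\subseteq\mathbb{R}^\ell$ is a nonempty closed convex cone, $\mathcal K^*=\{y:\langle y,x\rangle\ge0\ \forall x\in\mathcal K\}$ its dual cone, $u\preceq_{\mathcal K}v$ means $v-u\in\mathcal K$, $\Pi_S$ is the Euclidean projection onto a closed convex set $S$, $\mathrm{dist}(y,S)$ the Euclidean distance. $\partial_\varepsilon\varphi(z):=\{u:\varphi(z')\ge\varphi(z)+\langle u,z'-z\rangle-\varepsilon\ \forall z'\}$, $\partial=\partial_0$. For differentiable $g:\mathbb{R}^n\to\mathbb{R}^\ell$, $\nabla g(z)\in\mathbb{R}^{n\times\ell}$ is the transpose of the Jacobian. $g$ is $\mathcal K$-convex if $g(tz'+(1-t)z)-tg(z')-(1-t)g(z)\preceq_{\mathcal K}0$ for all $z,z'$, $t\in[0,1]$. (B1) $h:\mathbb{R}^n\to(-\infty,\infty]$ proper lsc convex, $K_h$-Lipschitz on its domain; $\mathcal H:=\mathrm{dom}\,h$ compact with diameter $D_h$. (B2) $f$ differentiable on an open set containing $\mathcal H$;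 $m_f,L_f>0$ with $f(z')-f(z)-\langle\nabla f(z),z'-z\rangle\ge-\frac{m_f}{2}\|z'-z\|^2$ and $\|\nabla f(z')-\nabla f(z)\|\le L_f\|z'-z\|$ on $\mathcal H$. (B3) $g$ is $\mathcal K$-convex, differentiable, $\nabla g$ is $L_g$-Lipschitz on $\mathbb{R}^n$. (B4) there exist $\bar z\in\mathrm{int}\,\mathcal H$, $\tau\in(0,1]$ with $g(\bar z)\preceq_{\mathcal K}0$ and $\max\{\|\nabla g(z)p\|,|\langle p,g(\bar z)\rangle|\}\ge\tau\|p\|$ for all $z\in\mathcal H$, $p\in\mathcal K^*$. Constants: $B_f^{(1)}:=\sup_{\mathcal H}\|\nabla f\|$, $B_g^{(0)}:=\sup_{\mathcal H}\|g\|$, $B_g^{(1)}:=\sup_{\mathcal H}\|\nabla g\|$. Functions: $\phi=f+h$; $\mathcal L_c(z;p):=f(z)+h(z)+\frac1{2c}[\mathrm{dist}^2(p+cg(z),-\mathcal K)-\|p\|^2]$; $\widetilde{\mathcal L}_c(z;p):=\mathcal L_c(z;p)-h(z)$, with $\nabla_z\widetilde{\mathcal L}_c(z;p)=\nabla f(z)+\nabla g(z)\Pi_{\mathcal K^*}(p+cg(z))$; $\Lambda(c,p):=L_f+L_g\|p\|+c(B_g^{(0)}L_g+[B_g^{(1)}]^2)$. NL-IAPIAL method. Inputs: $\lambda\in(0,1/(2m_f)]$, $\sigma\in(0,1/\sqrt2]$, $c_1>0$, $(z_0,p_0)\in\mathcal H\times\mathbb{R}^\ell$, $(\hat\rho,\hat\eta)\in\mathbb{R}^2_{++}$.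 Set $\hat k=0$, $k=1$. Iteration $k$: (1) set $L^\psi_{k-1}:=\lambda\Lambda(c_k,p_{k-1})+1$, $\sigma_{k-1}:=\sigma/\sqrt{L^\psi_{k-1}}$, and obtain (by any procedure) $(z_k,v_k,\varepsilon_k)\in\mathbb{R}^n\times\mathbb{R}^n\times\mathbb{R}_+$ with $v_k\in\partial_{\varepsilon_k}(\lambda\mathcal L_{c_k}(\cdot;p_{k-1})+\frac12\|\cdot-z_{k-1}\|^2)(z_k)$ and $\|v_k\|^2+2\varepsilon_k\le\sigma_{k-1}^2\|v_k+z_{k-1}-z_k\|^2$. (2) Set $r_k:=v_k+z_{k-1}-z_k$, $\delta_k:=\varepsilon_k/\lambda$, $\hat z_k:=\mathrm{argmin}_u\{\lambda[\langle\nabla_z\widetilde{\mathcal L}_{c_k}(z_k;p_{k-1}),u-z_k\rangle+h(u)]-\langle r_k,u-z_k\rangle+\frac{L^\psi_{k-1}}2\|u-z_k\|^2\}$, $w_k:=\frac1\lambda[r_k+L^\psi_{k-1}(z_k-\hat z_k)]$, $\hat p_k:=\Pi_{\mathcal K^*}(p_{k-1}+c_kg(\hat z_k))$, $\hat q_k:=(p_{k-1}-\hat p_k)/c_k$, $\hat w_k:=w_k+\nabla_z\widetilde{\mathcal L}_{c_k}(\hat z_k;p_{k-1})-\nabla_z\widetilde{\mathcal L}_{c_k}(z_k;p_{k-1})$; if $\|\hat w_k\|\le\hat\rho$ and $\|\hat q_k\|\le\hat\eta$, stop. (3) $p_k:=\Pi_{\mathcal K^*}(p_{k-1}+c_kg(z_k))$.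 (4) If $k>\hat k+1$ and $\Delta_k:=\frac{1}{k-\hat k-1}[\mathcal L_{c_k}(z_{\hat k+1};p_{\hat k+1})-\mathcal L_{c_k}(z_k;p_k)]\le\frac{\lambda(1-\sigma^2)\hat\rho^2}{4(1+2\sigma)^2}$, set $c_{k+1}=2c_k$ and $\hat k=k$; otherwise $c_{k+1}=c_k$. (5) $k\leftarrow k+1$. *)

theory Defs
  imports "HOL-Analysis.Analysis"
begin

definition dual_cone :: "'b::real_inner set \<Rightarrow> 'b set" where
  "dual_cone K = {y. \<forall>x\<in>K. 0 \<le> y \<bullet> x}"

definition K_convex :: "'b::real_vector set \<Rightarrow> ('a::real_vector \<Rightarrow> 'b) \<Rightarrow> bool" where
  "K_convex K g \<longleftrightarrow> (\<forall>z z' t. 0 \<le> t \<and> t \<le> 1 \<longrightarrow>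
      0 - (g (t *\<^sub>R z' + (1 - t) *\<^sub>R z) - t *\<^sub>R g z' - (1 - t) *\<^sub>R g z) \<in> K)"

text \<open>epsilon-subdifferential of an extended-valued function phi whose effective domain is H;
  phi is represented by its (real) values on H and is understood to be +infinity outside H.
  Hence u is an eps-subgradient at z iff z is in H and the inequality holds for all z' in H
  (for z' outside H it holds trivially; at z outside H the set is empty).\<close>
definition eps_subdiff_on :: "'a::real_inner set \<Rightarrow> ('a \<Rightarrow> real) \<Rightarrow> real \<Rightarrow> 'a \<Rightarrow> 'a set" where
  "eps_subdiff_on H \<phi> \<epsilon> z =
     {u. z \<in> H \<and> (\<forall>z'\<in>H. \<phi> z' \<ge> \<phi> z + u \<bullet> (z' - z) - \<epsilon>)}"

definition aug_lag ::
  "('a \<Rightarrow> real) \<Rightarrow> ('a \<Rightarrow> real) \<Rightarrow> ('a \<Rightarrow> 'b::euclidean_space) \<Rightarrow> 'b set \<Rightarrow> real \<Rightarrow> 'a \<Rightarrow> 'b \<Rightarrow> real" where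
  "aug_lag f h g K c z p =
     f z + h z + (1 / (2 * c)) * ((infdist (p + c *\<^sub>R g z) (uminus ` K))\<^sup>2 - (norm p)\<^sup>2)"

definition Lambda_const :: "real \<Rightarrow> real \<Rightarrow> real \<Rightarrow> real \<Rightarrow> real \<Rightarrow> 'b::real_normed_vector \<Rightarrow> real" where
  "Lambda_const Lf Lg Bg0 Bg1 c p = Lf + Lg * norm p + c * (Bg0 * Lg + Bg1\<^sup>2)"

end

theory Submission
  imports Defs
begin

text \<open>
  For the multiplier update, Moreau's decomposition
  of \<open>x = p + c g(z)\<close> along the dual cone and the negative cone gives
  \<open>dist(x, -K) = \<parallel>p\<^sup>+\<parallel>\<close> for \<open>p\<^sup>+ = \<Pi>\<^sub>K\<^sub>*(x)\<close>, and the point \<open>x - p\<^sup>+ \<in> -K\<close> certifies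
  \<open>dist(p\<^sup>+ + c g(z), -K) \<le> \<parallel>2p\<^sup>+ - p\<parallel>\<close>; expanding the squares yields the term \<open>\<parallel>p\<^sup>+ - p\<parallel>\<^sup>2/c\<close>.
  For the primal step, the \<open>\<epsilon>\<close>-subgradient inequality of the prox subproblem tested at the
  previous iterate, together with the relative error criterion \<open>\<parallel>v\<parallel>\<^sup>2 + 2\<epsilon> \<le> \<sigma>\<^sup>2\<parallel>r\<parallel>\<^sup>2\<close>,
  gives sufficient decrease of the Lagrangian.
\<close>

lemma closed_dual_cone: "closed (dual_cone K)"
  and convex_dual_cone: "convex (dual_cone K)"
proof -
  have "dual_cone K = (\<Inter>x\<in>K. {y. inner x y \<ge> 0})"
    unfolding dual_cone_def by (auto simp: inner_commute)
  then show "closed (dual_cone K)" "convex (dual_cone K)"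
    by (auto intro!: closed_INT convex_INT closed_halfspace_ge convex_halfspace_ge)
qed

lemma moreau_decomposition_dual_cone:
  fixes K :: "'b::euclidean_space set"
  assumes K: "K \<noteq> {}" "closed K" "convex K" "cone K"
  shows "x - closest_point (dual_cone K) x \<in> uminus ` K"
    and "infdist x (uminus ` K) = norm (closest_point (dual_cone K) x)"
proof -
  define S where "S = uminus ` K"
  have S: "closed S" "convex S" "S \<noteq> {}"
    unfolding S_def using closed_negations[OF K(2)] convex_negations[OF K(3)] K(1) by auto
  have cone_S: "t *\<^sub>R y \<in> S" if "y \<in> S" "t \<ge> 0" for y t
    using that mem_cone[OF K(4)] unfolding S_def by (force intro: image_eqI[of _ _ "t *\<^sub>R - y"])
  define a where "a = closest_point S x"
  define q where "q = x - a"
  have aS: "a \<in> S" unfolding a_def using closest_point_in_set[OF S(1,3)] .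
  have obtuse: "inner q (y - a) \<le> 0" if "y \<in> S" for y
    unfolding q_def a_def using closest_point_dot[OF S(2,1) that] .
  have "inner q (0 - a) \<le> 0" "inner q (2 *\<^sub>R a - a) \<le> 0"
    using obtuse[OF cone_S[OF aS, of 0]] obtuse[OF cone_S[OF aS, of 2]] by auto
  then have qa: "inner q a = 0" by (simp add: inner_diff_right algebra_simps)
  have q_dual: "q \<in> dual_cone K"
    using obtuse qa unfolding dual_cone_def S_def by (force simp: inner_diff_right)
  have "dist x q \<le> dist x w" if w: "w \<in> dual_cone K" for w
  proof -
    have "inner w a \<le> 0" using w aS unfolding dual_cone_def S_def by auto
    then have "inner (q - w) a \<ge> 0" using qa by (simp add: inner_diff_left)
    moreover have "(norm (x - w))\<^sup>2 = (norm (q - w))\<^sup>2 + 2 * inner (q - w) a + (norm a)\<^sup>2"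
      unfolding q_def by (simp add: power2_norm_eq_inner inner_diff_left inner_diff_right
          inner_commute algebra_simps)
    ultimately have "(norm a)\<^sup>2 \<le> (norm (x - w))\<^sup>2" by simp
    then show ?thesis by (simp add: dist_norm q_def power2_le_iff_abs_le)
  qed
  then have q_proj: "q = closest_point (dual_cone K) x"
    using closest_point_unique[OF convex_dual_cone closed_dual_cone q_dual] by blast
  show "x - closest_point (dual_cone K) x \<in> uminus ` K"
    using aS unfolding q_proj[symmetric] q_def S_def by simp
  show "infdist x (uminus ` K) = norm (closest_point (dual_cone K) x)"
    unfolding S_def[symmetric] q_proj[symmetric] infdist_eq_setdist setdist_closest_point[OF S(1,3)]
    by (simp add: dist_norm q_def a_def)
qed

lemma aug_lag_multiplier_update_le:
  fixes K :: "'b::euclidean_space set"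
  assumes K: "K \<noteq> {}" "closed K" "convex K" "cone K" and c: "c > 0"
    and P: "P = closest_point (dual_cone K) (p + c *\<^sub>R g z)"
  shows "aug_lag f h g K c z P \<le> aug_lag f h g K c z p + (1 / c) * (norm (P - p))\<^sup>2"
proof -
  note moreau = moreau_decomposition_dual_cone[OF K, of "p + c *\<^sub>R g z", folded P]
  have "infdist (P + c *\<^sub>R g z) (uminus ` K) \<le> dist (P + c *\<^sub>R g z) (p + c *\<^sub>R g z - P)"
    using moreau(1) by (rule infdist_le)
  also have "\<dots> = norm (2 *\<^sub>R P - p)"
    by (simp add: dist_norm scaleR_2 algebra_simps)
  finally have "(infdist (P + c *\<^sub>R g z) (uminus ` K))\<^sup>2 \<le> (norm (2 *\<^sub>R P - p))\<^sup>2"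
    by (rule power_mono[OF _ infdist_nonneg])
  moreover have "(norm (2 *\<^sub>R P - p))\<^sup>2 - (norm P)\<^sup>2 = (norm P)\<^sup>2 - (norm p)\<^sup>2 + 2 * (norm (P - p))\<^sup>2"
    by (simp add: power2_norm_eq_inner inner_diff_left inner_diff_right inner_commute algebra_simps)
  ultimately have "(infdist (P + c *\<^sub>R g z) (uminus ` K))\<^sup>2 - (norm P)\<^sup>2
      \<le> (infdist (p + c *\<^sub>R g z) (uminus ` K))\<^sup>2 - (norm p)\<^sup>2 + 2 * (norm (P - p))\<^sup>2"
    using moreau(2) by simp
  then have "(1 / (2 * c)) * ((infdist (P + c *\<^sub>R g z) (uminus ` K))\<^sup>2 - (norm P)\<^sup>2)
      \<le> (1 / (2 * c)) * ((infdist (p + c *\<^sub>R g z) (uminus ` K))\<^sup>2 - (norm p)\<^sup>2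
        + 2 * (norm (P - p))\<^sup>2)"
    using c by (intro mult_left_mono) auto
  then show ?thesis
    using c unfolding aug_lag_def by (simp add: distrib_left)
qed

lemma inexact_prox_descent:
  fixes L :: "'a::real_inner \<Rightarrow> real"
  assumes lam: "lam > 0" and y: "y \<in> H"
    and v: "v \<in> eps_subdiff_on H (\<lambda>u. lam * L u + (1/2) * (norm (u - y))\<^sup>2) \<epsilon> z"
    and err: "(norm v)\<^sup>2 + 2 * \<epsilon> \<le> \<sigma>\<^sup>2 * (norm (v + y - z))\<^sup>2"
  shows "L z \<le> L y - ((1 - \<sigma>\<^sup>2) / (2 * lam)) * (norm (v + y - z))\<^sup>2"
proof -
  define r where "r = v + y - z"
  have "lam * L y \<ge> lam * L z + (1/2) * (norm (z - y))\<^sup>2 + v \<bullet> (y - z) - \<epsilon>"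
    using v y unfolding eps_subdiff_on_def by auto
  moreover have "(1/2) * (norm (z - y))\<^sup>2 + v \<bullet> (y - z) = (1/2) * (norm r)\<^sup>2 - (1/2) * (norm v)\<^sup>2"
    unfolding r_def by (simp add: power2_norm_eq_inner inner_diff_left inner_diff_right
        inner_add_left inner_add_right inner_commute algebra_simps)
  ultimately have "lam * L z \<le> lam * L y - (1/2) * (1 - \<sigma>\<^sup>2) * (norm r)\<^sup>2"
    using err unfolding r_def[symmetric] by (simp add: algebra_simps)
  then show ?thesis
    using lam unfolding r_def by (simp add: field_simps)
qed

lemma doubling_sequence_pos:
  fixes c :: "nat \<Rightarrow> real"
  assumes "c 1 > 0" and "\<forall>j. 1 \<le> j \<and> j < k \<longrightarrow> c (Suc j) = c j \<or> c (Suc j) = 2 * c j"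
  shows "1 \<le> j \<Longrightarrow> j \<le> k \<Longrightarrow> c j > 0"
proof (induction j rule: dec_induct)
  case base then show ?case using assms(1) by simp
next
  case (step j) then show ?case using assms(2) by fastforce
qed

lemma lipschitz_adjoint_const_nonneg:
  fixes g' :: "'a::euclidean_space \<Rightarrow> 'a \<Rightarrow> 'b::euclidean_space"
  assumes lin: "\<And>z. linear (g' z)"
    and lip: "\<forall>z z'. onorm (\<lambda>q. adjoint (g' z') q - adjoint (g' z) q) \<le> Lg * norm (z' - z)"
  shows "0 \<le> Lg"
proof -
  obtain b :: 'a where b: "b \<in> Basis" using nonempty_Basis by blast
  have "bounded_linear (\<lambda>q. adjoint (g' b) q - adjoint (g' 0) q)"
    using adjoint_linear[OF lin] by (simp add: linear_conv_bounded_linear bounded_linear_sub)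
  then have "0 \<le> onorm (\<lambda>q. adjoint (g' b) q - adjoint (g' 0) q)" by (rule onorm_pos_le)
  also have "\<dots> \<le> Lg * norm b" using lip by (metis diff_zero)
  finally show ?thesis using b by (simp add: nonzero_Basis zero_le_mult_iff)
qed

lemma Sup_norm_image_nonneg:
  assumes "compact H" "H \<noteq> {}" "continuous_on H g"
  shows "0 \<le> Sup ((\<lambda>u. norm (g u)) ` H)"
proof -
  have "compact ((\<lambda>u. norm (g u)) ` H)"
    using assms(1,3) by (intro compact_continuous_image continuous_intros)
  then have bdd: "bdd_above ((\<lambda>u. norm (g u)) ` H)"
    by (intro bounded_imp_bdd_above compact_imp_bounded)
  obtain u where "u \<in> H" using assms(2) by blast
  then have "norm (g u) \<le> Sup ((\<lambda>u. norm (g u)) ` H)" using bdd by (auto intro: cSup_upper)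
  then show ?thesis using norm_ge_zero[of "g u"] by linarith
qed

lemma Lambda_const_nonneg:
  "0 \<le> Lf \<Longrightarrow> 0 \<le> Lg \<Longrightarrow> 0 \<le> Bg0 \<Longrightarrow> 0 \<le> c \<Longrightarrow> 0 \<le> Lambda_const Lf Lg Bg0 Bg1 c p"
  unfolding Lambda_const_def by simp

lemma power2_div_sqrt_shift_le:
  fixes \<sigma> :: real
  assumes "0 \<le> lam" "0 \<le> \<Lambda>"
  shows "(\<sigma> / sqrt (lam * \<Lambda> + 1))\<^sup>2 \<le> \<sigma>\<^sup>2"
proof -
  have "1 \<le> lam * \<Lambda> + 1" using assms by simp
  then show ?thesis
    using mult_left_mono[of 1 "lam * \<Lambda> + 1" "\<sigma>\<^sup>2"] by (simp add: power_divide divide_le_eq)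
qed

theorem lemma4p5:
  fixes f h :: "'a::euclidean_space \<Rightarrow> real"
    and gradf :: "'a \<Rightarrow> 'a"
    and g :: "'a \<Rightarrow> 'b::euclidean_space"
    and g' :: "'a \<Rightarrow> 'a \<Rightarrow> 'b"
    and K :: "'b set" and H :: "'a set"
    and Kh mf Lf Lg lam sig c1 :: real
    and z v :: "nat \<Rightarrow> 'a" and eps :: "nat \<Rightarrow> real"
    and p :: "nat \<Rightarrow> 'b" and c :: "nat \<Rightarrow> real"
    and k :: nat
  assumes K_cone: "K \<noteq> {}" "closed K" "convex K" "cone K"
    \<comment> \<open>(B1): h proper lsc convex, Kh-Lipschitz on its domain H, H compact
        (h is given by its values on H and is +infinity outside H)\<close>
    and B1: "H \<noteq> {}" "compact H" "convex H" "convex_on H h"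
            "continuous_on H h" "Kh-lipschitz_on H h"
    \<comment> \<open>(B2)\<close>
    and B2_diff: "\<exists>U. open U \<and> H \<subseteq> U \<and>
                    (\<forall>z\<in>U. (f has_derivative (\<lambda>x. gradf z \<bullet> x)) (at z))"
    and B2_const: "mf > 0" "Lf > 0"
    and B2_weak: "\<forall>z\<in>H. \<forall>z'\<in>H.
                    f z' - f z - gradf z \<bullet> (z' - z) \<ge> - (mf / 2) * (norm (z' - z))\<^sup>2"
    and B2_lip: "\<forall>z\<in>H. \<forall>z'\<in>H. norm (gradf z' - gradf z) \<le> Lf * norm (z' - z)"
    \<comment> \<open>(B3): nabla g(z) = adjoint (g' z), the transpose of the Jacobian\<close>
    and B3_conv: "K_convex K g"
    and B3_diff: "\<forall>z. (g has_derivative g' z) (at z)"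
    and B3_lip: "\<forall>z z'. onorm (\<lambda>q. adjoint (g' z') q - adjoint (g' z) q) \<le> Lg * norm (z' - z)"
    \<comment> \<open>method inputs\<close>
    and lam: "0 < lam" "lam \<le> 1 / (2 * mf)"
    and sig: "0 < sig" "sig \<le> 1 / sqrt 2"
    and c1: "c1 > 0" "c 1 = c1"
    and z0: "z 0 \<in> H"
    \<comment> \<open>penalty update (step 4): c_(j+1) is either c_j or 2 c_j\<close>
    and c_upd: "\<forall>j. 1 \<le> j \<and> j < k \<longrightarrow> (c (Suc j) = c j \<or> c (Suc j) = 2 * c j)"
    \<comment> \<open>step 1 at every iteration j = 1..k\<close>
    and step1: "\<forall>j. 1 \<le> j \<and> j \<le> k \<longrightarrow>
        (let Bg0 = Sup ((\<lambda>u. norm (g u)) ` H);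
             Bg1 = Sup ((\<lambda>u. onorm (adjoint (g' u))) ` H);
             Lpsi = lam * Lambda_const Lf Lg Bg0 Bg1 (c j) (p (j - 1)) + 1;
             sigj = sig / sqrt Lpsi
         in eps j \<ge> 0 \<and>
            v j \<in> eps_subdiff_on H
                    (\<lambda>u. lam * aug_lag f h g K (c j) u (p (j - 1)) + (1/2) * (norm (u - z (j - 1)))\<^sup>2)
                    (eps j) (z j) \<and>
            (norm (v j))\<^sup>2 + 2 * eps j \<le> sigj\<^sup>2 * (norm (v j + z (j - 1) - z j))\<^sup>2)"
    \<comment> \<open>step 3 at every iteration j = 1..k\<close>
    and step3: "\<forall>j. 1 \<le> j \<and> j \<le> k \<longrightarrow>
        p j = closest_point (dual_cone K) (p (j - 1) + c j *\<^sub>R g (z j))"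
    and k: "1 \<le> k"
  shows "aug_lag f h g K (c k) (z k) (p k)
           \<le> aug_lag f h g K (c k) (z k) (p (k - 1)) + (1 / c k) * (norm (p k - p (k - 1)))\<^sup>2
       \<and> aug_lag f h g K (c k) (z k) (p k)
           \<le> aug_lag f h g K (c k) (z (k - 1)) (p (k - 1))
              - ((1 - sig\<^sup>2) / (2 * lam)) * (norm (v k + z (k - 1) - z k))\<^sup>2
              + (1 / c k) * (norm (p k - p (k - 1)))\<^sup>2"
proof -
  have ck: "c k > 0" using doubling_sequence_pos[OF _ c_upd] c1 k by simp
  have g_lin: "\<And>z. linear (g' z)" using B3_diff has_derivative_linear by blast
  have "continuous_on H g"
    using B3_diff has_derivative_continuous continuous_at_imp_continuous_on by blast
  define Bg0 where "Bg0 = Sup ((\<lambda>u. norm (g u)) ` H)"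
  define Bg1 where "Bg1 = Sup ((\<lambda>u. onorm (adjoint (g' u))) ` H)"
  define \<Lambda> where "\<Lambda> = Lambda_const Lf Lg Bg0 Bg1 (c k) (p (k - 1))"
  have "0 \<le> \<Lambda>"
    unfolding \<Lambda>_def using lipschitz_adjoint_const_nonneg[OF g_lin B3_lip] Sup_norm_image_nonneg[OF B1(2,1)]
      \<open>continuous_on H g\<close> B2_const(2) ck unfolding Bg0_def by (intro Lambda_const_nonneg) auto
  then have sig_k: "(sig / sqrt (lam * \<Lambda> + 1))\<^sup>2 \<le> sig\<^sup>2"
    using lam(1) by (intro power2_div_sqrt_shift_le) auto
  define L where "L = (\<lambda>u. aug_lag f h g K (c k) u (p (k - 1)))"
  define r where "r = v k + z (k - 1) - z k"
  have v_sub: "v k \<in> eps_subdiff_on H (\<lambda>u. lam * L u + (1/2) * (norm (u - z (k - 1)))\<^sup>2) (eps k) (z k)"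
    and "(norm (v k))\<^sup>2 + 2 * eps k \<le> (sig / sqrt (lam * \<Lambda> + 1))\<^sup>2 * (norm r)\<^sup>2"
    using step1 k unfolding L_def r_def \<Lambda>_def Bg0_def Bg1_def Let_def by auto
  then have err: "(norm (v k))\<^sup>2 + 2 * eps k \<le> sig\<^sup>2 * (norm r)\<^sup>2"
    using mult_right_mono[OF sig_k, of "(norm r)\<^sup>2"] by simp
  \<comment> \<open>\<open>z\<^sub>k\<^sub>-\<^sub>1 \<in> H\<close> because it is the point at which the previous \<open>\<epsilon>\<close>-subdifferential is nonempty\<close>
  have "z (k - 1) \<in> H"
    using z0 step1 k unfolding eps_subdiff_on_def Let_def
    by (cases "k = 1") (auto dest: spec[of _ "k - 1"])
  with inexact_prox_descent[OF lam(1) _ v_sub] err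
  have "L (z k) \<le> L (z (k - 1)) - ((1 - sig\<^sup>2) / (2 * lam)) * (norm r)\<^sup>2"
    unfolding r_def by blast
  moreover have "aug_lag f h g K (c k) (z k) (p k)
      \<le> L (z k) + (1 / c k) * (norm (p k - p (k - 1)))\<^sup>2"
    unfolding L_def using step3 k by (intro aug_lag_multiplier_update_le[OF K_cone ck]) simp
  ultimately show ?thesis unfolding L_def r_def by linarith
qed

end
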